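(* Let $(M,g_{\alpha\beta})$ be a conformal completion à la Penrose of a physical space-time with arbitrary $\Lambda$, in the gauge of the context. Choose $p_0\in\mathscr{J}^+$ and a future null vector $\ell^\alpha$ at $p_0$, and let $\gamma$ be the corresponding null geodesic with affine parameter $\lambda$, $\lambda|_{p_0}=0$, normalised by $\ell^\mu N_\mu|_{p_0}=-1$. Assume $\Omega(\lambda)$ admits an expansion in powers of $\lambda$ near $0$, and write $\Omega_i:=\frac{d^i\Omega}{d\lambda^i}(0)$; note $\Omega(0)=0$ and $\Omega_1=-1$. Then, near $\lambda=0$, the physical Weyl tensor along $\gamma$ satisfies at $p_0$ $$(L^*\hat C)_{\alpha\beta\gamma\delta}=\lambda\, d^{(N)}_{\alpha\beta\gamma\delta}+\lambda^2 e^{(III)}_{\alpha\beta\gamma\delta}+\lambda^3 f^{(II/D)}_{\alpha\beta\gamma\delta}+\lambda^4 g^{(I)}_{\alpha\beta\gamma\delta}+\lambda^5 h^{(I)}_{\alpha\beta\gamma\delta}+O(\lambda^6),$$ where (suppressing indices): $$d^{(N)}=-C^{(4,0)},$$ $$e^{(III)}=C^{(3,0)}+\tfrac{\Omega_2}{2}C^{(4,0)}-C^{(4,1)},$$ $$f^{(II/D)}=-C^{(2,0)}-\Omega_2C^{(3,0)}+\tfrac{\Omega_3}{6}C^{(4,0)}+C^{(3,1)}-C^{(4,2)}+\tfrac{\Omega_2}{2}C^{(4,1)},$$ $$g^{(I)}=C^{(1,0)}+\tfrac{3\Omega_2}{2}C^{(2,0)}+\Big(\tfrac{\Omega_2^2}{4}-\tfrac{\Omega_3}{3}\Big)C^{(3,0)}+\tfrac{\Omega_4}{4!}C^{(4,0)}-C^{(2,1)}+C^{(3,2)}-C^{(4,3)}+\tfrac{\Omega_2}{2}C^{(4,2)}-\Omega_2C^{(3,1)}+\tfrac{\Omega_3}{6}C^{(4,1)},$$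 $$h^{(I)}=-C^{(0,0)}-2\Omega_2C^{(1,0)}+\Big(\tfrac{\Omega_3}{2}-\tfrac34\Omega_2^2\Big)C^{(2,0)}+\Big(\tfrac16\Omega_2\Omega_3-\tfrac{\Omega_4}{12}\Big)C^{(3,0)}+\tfrac{\Omega_5}{5!}C^{(4,0)}+C^{(1,1)}-C^{(2,2)}+C^{(3,3)}-C^{(4,4)}+\tfrac32\Omega_2C^{(2,1)}-\Omega_2C^{(3,2)}+\tfrac{\Omega_2}{2}C^{(4,3)}+\tfrac{\Omega_2^2}{4}C^{(3,1)}-\tfrac{\Omega_3}{3}C^{(3,1)}+\tfrac{\Omega_3}{6}C^{(4,2)}+\tfrac{\Omega_4}{4!}C^{(4,1)}.$$ These five tensors are Weyl-tensor candidates. In the null tetrad containing $\ell^\alpha$ and $k^\alpha$, $d^{(N)}$ has only $\psi_4$ possibly non-zero (type N or zero, with $\ell$ a fourfold principal null direction). Their generic Petrov types are N, III, II/D, I, I respectively.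
   Context: A conformal completion à la Penrose of a physical space-time $(\hat M,\hat g_{\alpha\beta})$ is a space-time-with-boundary $(M,g_{\alpha\beta})$ satisfying the following. $\hat M\subset M$ is the interior. There is a smooth function $\Omega$ on $M$ with $\Omega>0$ and $g_{\alpha\beta}=\Omega^2\hat g_{\alpha\beta}$ on $\hat M$. The conformal boundary is $\mathscr{J}=\{\Omega=0\}$, and $d\Omega\neq0$ on $\mathscr{J}$; $\mathscr{J}^+$ denotes its future component. The physical metric satisfies Einstein's equations with cosmological constant $\Lambda$. The signature is $(-,+,+,+)$. $\nabla$ and $\hat\nabla$ denote the Levi-Civita connections of $g$ and $\hat g$. Set $N_\alpha:=\nabla_\alpha\Omega$; indices are raised and lowered with $g$. The gauge is fixed so that $\nabla_\alpha N_\beta=0$ on $\mathscr{J}$, hence $N_\alpha N^\alpha=-\Lambda/3$ on $\mathscr{J}$. The physical Weyl tensor satisfies $\hat C_{\alpha\beta\gamma}{}^\delta=C_{\alpha\beta\gamma}{}^\delta$ on $\hat M$. The rescaled Weyl tensor $d$ is defined by $\Omega d_{\alpha\beta\gamma}{}^\delta=C_{\alpha\beta\gamma}{}^\delta$ and is assumed to extend smoothly to $\mathscr{J}$. A Weyl-tensor candidate is a tensor with all algebraic symmetries of a Weyl tensor (pair antisymmetry, pair-exchange symmetry, cyclic identity, tracelessness). The geodesic $\gamma:[-1,0]\to M$ is the null $g$-geodesic with: - $\gamma(0)=p_0$ and $\gamma([-1,0))\subset\hat M$; - tangent $\ell^\alpha$ and affine parameter $\lambda$. Write $\Omega(\lambda)=\Omega(\gamma(\lambda))$.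 At $p_0$ set: - $k^\alpha:=N^\alpha-\frac{\Lambda}{6}\ell^\alpha$, which is null with $k\cdot\ell=-1$; - $P^\alpha{}_\beta:=\delta^\alpha_\beta+k^\alpha\ell_\beta+\ell^\alpha k_\beta$. Use the null tetrad $(\ell,k,m,\bar m)$ with Newman–Penrose Weyl scalars labelled so that only $\psi_4\neq0$ means $\ell$ is a fourfold principal null direction, and only $\psi_0\neq0$ means $k$ is. Let $t$ and $\hat t$ be the $\nabla$- and $\hat\nabla$-parallel propagators of covectors along $\gamma$ ($t(\lambda_i,\lambda_j)$ maps from $\gamma(\lambda_j)$ to $\gamma(\lambda_i)$). Define $$L_\alpha{}^\beta:=t_\alpha{}^\mu(0,-1)\hat t_\mu{}^\rho(-1,\lambda)t_\rho{}^\beta(\lambda,0)$$ and, for a covariant tensor $T$ at $\gamma(\lambda)$, $$(L^*T)_{\alpha_1\dots\alpha_r}:=L_{\alpha_1}{}^{\nu_1}\cdots L_{\alpha_r}{}^{\nu_r}t_{\nu_1}{}^{\mu_1}(0,\lambda)\cdots t_{\nu_r}{}^{\mu_r}(0,\lambda)T_{\mu_1\dots\mu_r}.$$ The tensors $C^{(a)}$ ($a=0,\dots,4$) are the Weyl-tensor candidates at $p_0$ in the decomposition $$L^*\hat C=\sum_{a=0}^4\Omega^{5-a}C^{(a)}.$$ They are regular as $\lambda\to0$, and each $C^{(a)}$ has only the Weyl scalar $\psi_a$ possibly non-vanishing in the tetrad $(\ell,k,m,\bar m)$. Their leading term is $C^{(4,0)}_{\alpha\beta\gamma\delta}=\frac{4}{\Omega(-1)^2}d_{\mu\nu\rho\sigma}k^\nu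 k^\sigma P_{[\alpha}{}^\mu\ell_{\beta]}P_{[\gamma}{}^\rho\ell_{\delta]}$. Their expansions are $C^{(a)}=\sum_{i\ge0}C^{(a,i)}\lambda^i$. *)

theory Defs
  imports "HOL-Analysis.Analysis"
begin

text \<open>Tensors at the point p0, in components with respect to a fixed basis of the
  tangent space (indices range over the 4-element type 4).
  A covariant 4-tensor T has components T $ (a,b,c,d); a vector v has
  (contravariant) components v $ a; the metric g has components g $ a $ b.\<close>

type_synonym tensor4 = "real ^ (4 \<times> 4 \<times> 4 \<times> 4)"
type_synonym vec4 = "real ^ 4"
type_synonym metric4 = "real ^ 4 ^ 4"

definition gform :: "metric4 \<Rightarrow> vec4 \<Rightarrow> vec4 \<Rightarrow> real" where
  "gform g u v = (\<Sum>a\<in>UNIV. \<Sum>b\<in>UNIV. g $ a $ b * u $ a * v $ b)"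

definition weyl_candidate :: "metric4 \<Rightarrow> tensor4 \<Rightarrow> bool" where
  "weyl_candidate g T \<longleftrightarrow>
     (\<forall>a b c d. T $ (a,b,c,d) = - T $ (b,a,c,d)) \<and>
     (\<forall>a b c d. T $ (a,b,c,d) = - T $ (a,b,d,c)) \<and>
     (\<forall>a b c d. T $ (a,b,c,d) = T $ (c,d,a,b)) \<and>
     (\<forall>a b c d. T $ (a,b,c,d) + T $ (a,c,d,b) + T $ (a,d,b,c) = 0) \<and>
     (\<forall>b d. (\<Sum>a\<in>UNIV. \<Sum>c\<in>UNIV. matrix_inv g $ a $ c * T $ (a,b,c,d)) = 0)"

text \<open>Null tetrad (l, k, m, mbar) with m = (m1 + i m2)/sqrt 2, for the metric g of
  signature (-,+,+,+): l, k null, g(l,k) = -1, m1, m2 orthonormal spacelike and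
  orthogonal to l and k.\<close>
definition null_tetrad :: "metric4 \<Rightarrow> vec4 \<Rightarrow> vec4 \<Rightarrow> vec4 \<Rightarrow> vec4 \<Rightarrow> bool" where
  "null_tetrad g l k m1 m2 \<longleftrightarrow>
     gform g l l = 0 \<and> gform g k k = 0 \<and> gform g l k = -1 \<and>
     gform g l m1 = 0 \<and> gform g l m2 = 0 \<and> gform g k m1 = 0 \<and> gform g k m2 = 0 \<and>
     gform g m1 m1 = 1 \<and> gform g m2 m2 = 1 \<and> gform g m1 m2 = 0"

definition cvec :: "vec4 \<Rightarrow> 4 \<Rightarrow> complex" where
  "cvec v a = complex_of_real (v $ a)"

definition mvec :: "vec4 \<Rightarrow> vec4 \<Rightarrow> 4 \<Rightarrow> complex" where
  "mvec m1 m2 a = (complex_of_real (m1 $ a) + \<i> * complex_of_real (m2 $ a)) / complex_of_real (sqrt 2)"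

definition mbarvec :: "vec4 \<Rightarrow> vec4 \<Rightarrow> 4 \<Rightarrow> complex" where
  "mbarvec m1 m2 a = (complex_of_real (m1 $ a) - \<i> * complex_of_real (m2 $ a)) / complex_of_real (sqrt 2)"

definition contr4 :: "tensor4 \<Rightarrow> (4 \<Rightarrow> complex) \<Rightarrow> (4 \<Rightarrow> complex) \<Rightarrow> (4 \<Rightarrow> complex) \<Rightarrow> (4 \<Rightarrow> complex) \<Rightarrow> complex" where
  "contr4 T u v w x = (\<Sum>a\<in>UNIV. \<Sum>b\<in>UNIV. \<Sum>c\<in>UNIV. \<Sum>d\<in>UNIV.
       complex_of_real (T $ (a,b,c,d)) * u a * v b * w c * x d)"

text \<open>Newman--Penrose Weyl scalars in the tetrad (l,k,m,mbar), labelled so that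
  "only psi 4 non-zero" means l is a fourfold principal null direction and
  "only psi 0 non-zero" means k is.\<close>
definition NP_psi :: "vec4 \<Rightarrow> vec4 \<Rightarrow> vec4 \<Rightarrow> vec4 \<Rightarrow> tensor4 \<Rightarrow> nat \<Rightarrow> complex" where
  "NP_psi l k m1 m2 T j =
     (let L = cvec l; K = cvec k; m = mvec m1 m2; mb = mbarvec m1 m2 in
      if j = 0 then contr4 T L m L m
      else if j = 1 then contr4 T L K L m
      else if j = 2 then contr4 T L m mb K
      else if j = 3 then contr4 T L K mb K
      else contr4 T K mb K mb)"

definition Omd :: "(real \<Rightarrow> real) \<Rightarrow> nat \<Rightarrow> real" where
  "Omd Om i = (deriv ^^ i) Om 0"

text \<open>The five coefficient tensors; C a i stands for C^(a,i), W i for Omega_i.\<close>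
definition dN :: "(nat \<Rightarrow> nat \<Rightarrow> tensor4) \<Rightarrow> tensor4" where
  "dN C = - C 4 0"

definition eIII :: "(nat \<Rightarrow> nat \<Rightarrow> tensor4) \<Rightarrow> (nat \<Rightarrow> real) \<Rightarrow> tensor4" where
  "eIII C W = C 3 0 + (W 2 / 2) *\<^sub>R C 4 0 - C 4 1"

definition fIID :: "(nat \<Rightarrow> nat \<Rightarrow> tensor4) \<Rightarrow> (nat \<Rightarrow> real) \<Rightarrow> tensor4" where
  "fIID C W = - C 2 0 - W 2 *\<^sub>R C 3 0 + (W 3 / 6) *\<^sub>R C 4 0 + C 3 1 - C 4 2
              + (W 2 / 2) *\<^sub>R C 4 1"

definition gI :: "(nat \<Rightarrow> nat \<Rightarrow> tensor4) \<Rightarrow> (nat \<Rightarrow> real) \<Rightarrow> tensor4" where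
  "gI C W = C 1 0 + (3 * W 2 / 2) *\<^sub>R C 2 0 + ((W 2)\<^sup>2 / 4 - W 3 / 3) *\<^sub>R C 3 0
            + (W 4 / fact 4) *\<^sub>R C 4 0 - C 2 1 + C 3 2 - C 4 3 + (W 2 / 2) *\<^sub>R C 4 2
            - W 2 *\<^sub>R C 3 1 + (W 3 / 6) *\<^sub>R C 4 1"

definition hI :: "(nat \<Rightarrow> nat \<Rightarrow> tensor4) \<Rightarrow> (nat \<Rightarrow> real) \<Rightarrow> tensor4" where
  "hI C W = - C 0 0 - (2 * W 2) *\<^sub>R C 1 0 + (W 3 / 2 - 3 / 4 * (W 2)\<^sup>2) *\<^sub>R C 2 0
            + (1 / 6 * W 2 * W 3 - W 4 / 12) *\<^sub>R C 3 0 + (W 5 / fact 5) *\<^sub>R C 4 0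
            + C 1 1 - C 2 2 + C 3 3 - C 4 4 + (3 / 2 * W 2) *\<^sub>R C 2 1 - W 2 *\<^sub>R C 3 2
            + (W 2 / 2) *\<^sub>R C 4 3 + ((W 2)\<^sup>2 / 4) *\<^sub>R C 3 1 - (W 3 / 3) *\<^sub>R C 3 1
            + (W 3 / 6) *\<^sub>R C 4 2 + (W 4 / fact 4) *\<^sub>R C 4 1"

end

(* Along the generator all data are convergent power series in the affine parameter, so the
   decomposition  L*C = sum_a Omega^(5-a) C^(a)  is itself a power series whose coefficients of
   order up to 5 are read off by multiplying out formal power series, using Omega_0 = 0 and
   Omega_1 = -1; the remainder is O(lambda^6) near 0.  Since Omega vanishes to first order,
   the coefficient of lambda^n involves only C^(a) with a >= 5 - n.  Being a Weyl candidate and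
   having a prescribed NP scalar vanish are linear conditions, and a power series lying in a
   subspace on an interval to the left of 0 has all its coefficients in that subspace; hence
   every C^(a,i) inherits the algebraic properties of C^(a), and so do the five coefficients. *)

theory Submission
  imports Defs "HOL-Complex_Analysis.Laurent_Convergence"
begin

lemma sums_imp_has_fps_expansion:
  fixes c :: "nat \<Rightarrow> real"
  assumes s: "0 < s" and sm: "\<And>x. \<bar>x\<bar> < s \<Longrightarrow> (\<lambda>n. c n * x ^ n) sums f x"
  shows "f has_fps_expansion Abs_fps c"
proof -
  have "fps_conv_radius (Abs_fps c) \<ge> s"
    unfolding fps_conv_radius_def
  proof (rule conv_radius_geI_ex')
    fix \<rho> :: real assume "0 < \<rho>" "ereal \<rho> < ereal s"
    then have "(\<lambda>n. c n * \<rho> ^ n) sums f \<rho>"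
      by (intro sm) simp
    then show "summable (\<lambda>n. fps_nth (Abs_fps c) n * of_real \<rho> ^ n)"
      by (simp add: sums_summable)
  qed
  then have "fps_conv_radius (Abs_fps c) > 0"
    using s by (simp add: less_le_trans[of 0 "ereal s"])
  moreover have "eventually (\<lambda>x. x \<in> ball 0 s) (nhds (0::real))"
    using s by (intro eventually_nhds_in_open) auto
  hence "eventually (\<lambda>x. eval_fps (Abs_fps c) x = f x) (nhds 0)"
    by eventually_elim (use sm in \<open>auto simp: eval_fps_def sums_iff\<close>)
  ultimately show ?thesis
    by (simp add: has_fps_expansion_def)
qed

lemma bounded_linear_powser_has_fps_expansion:
  fixes c :: "nat \<Rightarrow> 'a::real_normed_vector" and \<phi> :: "'a \<Rightarrow> real"
  assumes \<phi>: "bounded_linear \<phi>" and s: "0 < s"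
    and sm: "\<And>x. \<bar>x\<bar> < s \<Longrightarrow> (\<lambda>n. x ^ n *\<^sub>R c n) sums F x"
  shows "(\<lambda>x. \<phi> (F x)) has_fps_expansion Abs_fps (\<lambda>n. \<phi> (c n))"
proof (rule sums_imp_has_fps_expansion[OF s])
  fix x :: real assume "\<bar>x\<bar> < s"
  from bounded_linear.sums[OF \<phi> sm[OF this]]
  show "(\<lambda>n. \<phi> (c n) * x ^ n) sums \<phi> (F x)"
    by (simp add: linear_scale[OF bounded_linear.linear[OF \<phi>]] mult.commute)
qed

lemma higher_deriv_0_has_fps_expansion:
  fixes F :: "'a::{banach, real_normed_field} fps"
  assumes "f has_fps_expansion F"
  shows "(deriv ^^ n) f 0 = fact n * fps_nth F n"
proof -
  have "(deriv ^^ n) f has_fps_expansion (fps_deriv ^^ n) F"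
    by (induction n) (auto intro: has_fps_expansion_deriv assms)
  then show ?thesis
    by (simp add: has_fps_expansion_imp_0_eq_fps_nth_0 fps_0th_higher_deriv)
qed

lemma has_fps_expansion_eq_0_if_vanishes_at_left:
  fixes F :: "real fps"
  assumes f: "f has_fps_expansion F" and z: "eventually (\<lambda>x. f x = 0) (at_left 0)"
  shows "F = 0"
proof (rule ccontr)
  assume "F \<noteq> 0"
  define d where "d = subdegree F"
  define g where "g x = (if x = 0 then fps_nth F d else f x / x ^ d)" for x
  have "g has_fps_expansion fps_shift d F"
    unfolding g_def by (rule has_fps_expansion_shift[OF f]) (simp_all add: d_def)
  hence "(g \<longlongrightarrow> g 0) (at_left 0)"
    using has_fps_expansion_imp_continuous by (auto simp: continuous_within)
  moreover have "eventually (\<lambda>x. x \<in> {-1<..<0}) (at_left (0::real))"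
    by (rule eventually_at_left_real) simp
  hence "eventually (\<lambda>x. g x = 0) (at_left 0)"
    using z by eventually_elim (auto simp: g_def)
  hence "(g \<longlongrightarrow> 0) (at_left 0)"
    by (rule tendsto_eventually)
  ultimately have "g 0 = 0"
    by (rule tendsto_unique[OF trivial_limit_at_left_real])
  with \<open>F \<noteq> 0\<close> show False by (simp add: g_def d_def)
qed

lemma eval_fps_eq_truncation_plus_shift:
  fixes F :: "real fps"
  assumes "norm x < fps_conv_radius F"
  shows "eval_fps F x = (\<Sum>n<N. fps_nth F n * x ^ n) + x ^ N * eval_fps (fps_shift N F) x"
proof -
  have "(\<lambda>n. fps_nth F (n + N) * x ^ (n + N)) sums (eval_fps F x - (\<Sum>n<N. fps_nth F n * x ^ n))"
    by (rule sums_split_initial_segment[OF sums_eval_fps[OF assms]])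
  moreover have "(\<lambda>n. fps_nth F (n + N) * x ^ (n + N)) sums (x ^ N * eval_fps (fps_shift N F) x)"
    using sums_mult[OF sums_eval_fps[of x "fps_shift N F"], of "x ^ N"] assms
    by (simp add: power_add mult_ac)
  ultimately have "eval_fps F x - (\<Sum>n<N. fps_nth F n * x ^ n) = x ^ N * eval_fps (fps_shift N F) x"
    by (rule sums_unique2)
  then show ?thesis by simp
qed

lemma has_fps_expansion_remainder_bound:
  fixes F :: "real fps"
  assumes "f has_fps_expansion F"
  shows "eventually (\<lambda>x. \<bar>f x - (\<Sum>n<N. fps_nth F n * x ^ n)\<bar>
           \<le> (\<bar>fps_nth F N\<bar> + 1) * \<bar>x\<bar> ^ N) (nhds 0)"
proof -
  have R: "fps_conv_radius F > 0" and ev: "eventually (\<lambda>x. eval_fps F x = f x) (nhds 0)"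
    using assms by (auto simp: has_fps_expansion_def)
  let ?g = "eval_fps (fps_shift N F)"
  have "isCont ?g 0"
    using R by (intro continuous_eval_fps) (simp add: zero_ereal_def)
  hence "eventually (\<lambda>x. x \<noteq> 0 \<longrightarrow> dist (?g x) (?g 0) < 1) (nhds 0)"
    by (simp add: isCont_def tendsto_iff eventually_at_filter)
  hence "eventually (\<lambda>x. dist (?g x) (?g 0) < 1) (nhds 0)"
    by (rule eventually_mono) auto
  moreover have "eventually (\<lambda>x. x \<in> eball 0 (fps_conv_radius F)) (nhds 0)"
    using R by (intro eventually_nhds_in_open) (auto simp: zero_ereal_def)
  ultimately show ?thesis
    using ev
  proof eventually_elim
    case (elim x)
    have bound: "\<bar>?g x\<bar> \<le> \<bar>fps_nth F N\<bar> + 1"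
      using elim(1) by (simp add: eval_fps_at_0 dist_real_def)
    have "f x - (\<Sum>n<N. fps_nth F n * x ^ n) = x ^ N * ?g x"
      using elim(2,3) eval_fps_eq_truncation_plus_shift[of x F N] by simp
    hence "\<bar>f x - (\<Sum>n<N. fps_nth F n * x ^ n)\<bar> = \<bar>x\<bar> ^ N * \<bar>?g x\<bar>"
      by (simp add: abs_mult power_abs)
    also have "\<dots> \<le> \<bar>x\<bar> ^ N * (\<bar>fps_nth F N\<bar> + 1)"
      using bound by (rule mult_left_mono) simp
    finally show ?case by (simp add: ac_simps)
  qed
qed

(* Pairing with the orthogonal complement reduces this to scalar series; S = S\<^sup>\<bottom>\<^sup>\<bottom>. *)
lemma powser_coeffs_in_subspace:
  fixes c :: "nat \<Rightarrow> 'a::euclidean_space"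
  assumes S: "subspace S" and s: "0 < s"
    and sm: "\<And>x. \<bar>x\<bar> < s \<Longrightarrow> (\<lambda>n. x ^ n *\<^sub>R c n) sums F x"
    and in_S: "eventually (\<lambda>x. F x \<in> S) (at_left 0)"
  shows "c n \<in> S"
proof -
  have "orthogonal y (c n)" if y: "y \<in> S\<^sup>\<bottom>" for y
  proof -
    have "(\<lambda>x. y \<bullet> F x) has_fps_expansion Abs_fps (\<lambda>n. y \<bullet> c n)"
      by (rule bounded_linear_powser_has_fps_expansion[OF bounded_linear_inner_right s sm])
    moreover have "eventually (\<lambda>x. y \<bullet> F x = 0) (at_left 0)"
      using in_S by eventually_elim
        (use y in \<open>auto simp: orthogonal_comp_def orthogonal_def inner_commute\<close>)
    ultimately have "Abs_fps (\<lambda>n. y \<bullet> c n) = 0"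
      by (rule has_fps_expansion_eq_0_if_vanishes_at_left)
    then show ?thesis
      by (simp add: orthogonal_def fps_eq_iff)
  qed
  then have "c n \<in> S\<^sup>\<bottom>\<^sup>\<bottom>"
    by (simp add: orthogonal_comp_def)
  then show ?thesis
    by (simp add: orthogonal_comp_self[OF S])
qed

lemma weyl_candidateD:
  assumes "weyl_candidate g X"
  shows "X $ (a,b,c,d) = - X $ (b,a,c,d)" "X $ (a,b,c,d) = - X $ (a,b,d,c)"
    "X $ (a,b,c,d) = X $ (c,d,a,b)" "X $ (a,b,c,d) + X $ (a,c,d,b) + X $ (a,d,b,c) = 0"
    "(\<Sum>a\<in>UNIV. \<Sum>c\<in>UNIV. matrix_inv g $ a $ c * X $ (a,b,c,d)) = 0"
  using assms unfolding weyl_candidate_def by blast+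

lemma subspace_weyl_candidate: "subspace {T. weyl_candidate g T}"
proof -
  have zero: "weyl_candidate g 0"
    by (simp add: weyl_candidate_def)
  have add: "weyl_candidate g (X + Y)" if X: "weyl_candidate g X" and Y: "weyl_candidate g Y" for X Y
    unfolding weyl_candidate_def
  proof (intro conjI allI)
    fix a b c d
    note XY = weyl_candidateD(1-4)[OF X, of a b c d] weyl_candidateD(1-4)[OF Y, of a b c d]
    show "(X + Y) $ (a,b,c,d) = - (X + Y) $ (b,a,c,d)"
      and "(X + Y) $ (a,b,c,d) = - (X + Y) $ (a,b,d,c)"
      and "(X + Y) $ (a,b,c,d) = (X + Y) $ (c,d,a,b)"
      and "(X + Y) $ (a,b,c,d) + (X + Y) $ (a,c,d,b) + (X + Y) $ (a,d,b,c) = 0"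
      using XY by simp_all
  next
    fix b d
    show "(\<Sum>a\<in>UNIV. \<Sum>c\<in>UNIV. matrix_inv g $ a $ c * (X + Y) $ (a,b,c,d)) = 0"
      using weyl_candidateD(5)[OF X, of b d] weyl_candidateD(5)[OF Y, of b d]
      by (simp only: vector_add_component distrib_left sum.distrib)
  qed
  have scale: "weyl_candidate g (r *\<^sub>R X)" if X: "weyl_candidate g X" for r X
    unfolding weyl_candidate_def
  proof (intro conjI allI)
    fix a b c d
    note X' = weyl_candidateD(1-4)[OF X, of a b c d]
    show "(r *\<^sub>R X) $ (a,b,c,d) = - (r *\<^sub>R X) $ (b,a,c,d)"
      and "(r *\<^sub>R X) $ (a,b,c,d) = - (r *\<^sub>R X) $ (a,b,d,c)"
      and "(r *\<^sub>R X) $ (a,b,c,d) = (r *\<^sub>R X) $ (c,d,a,b)"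
      using X' by simp_all
    show "(r *\<^sub>R X) $ (a,b,c,d) + (r *\<^sub>R X) $ (a,c,d,b) + (r *\<^sub>R X) $ (a,d,b,c) = 0"
      using arg_cong[OF X'(4), of "\<lambda>s. r * s"] by (simp add: algebra_simps)
  next
    fix b d
    have "(\<Sum>a\<in>UNIV. \<Sum>c\<in>UNIV. matrix_inv g $ a $ c * (r *\<^sub>R X) $ (a,b,c,d))
        = r * (\<Sum>a\<in>UNIV. \<Sum>c\<in>UNIV. matrix_inv g $ a $ c * X $ (a,b,c,d))"
      by (simp only: vector_scaleR_component sum_distrib_left) (simp add: mult_ac)
    then show "(\<Sum>a\<in>UNIV. \<Sum>c\<in>UNIV. matrix_inv g $ a $ c * (r *\<^sub>R X) $ (a,b,c,d)) = 0"
      using weyl_candidateD(5)[OF X, of b d] by simp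
  qed
  show ?thesis
    unfolding subspace_def using zero add scale by blast
qed

lemma contr4_add: "contr4 (X + Y) u v w x = contr4 X u v w x + contr4 Y u v w x"
  unfolding contr4_def by (simp add: distrib_right sum.distrib)

lemma contr4_scaleR: "contr4 (c *\<^sub>R X) u v w x = complex_of_real c * contr4 X u v w x"
  unfolding contr4_def by (simp add: mult.assoc sum_distrib_left)

lemma NP_psi_add: "NP_psi l k m1 m2 (X + Y) j = NP_psi l k m1 m2 X j + NP_psi l k m1 m2 Y j"
  unfolding NP_psi_def Let_def by (simp add: contr4_add)

lemma NP_psi_scaleR: "NP_psi l k m1 m2 (c *\<^sub>R X) j = complex_of_real c * NP_psi l k m1 m2 X j"
  unfolding NP_psi_def Let_def by (simp add: contr4_scaleR)

lemma subspace_NP_psi_eq_0: "subspace {T. NP_psi l k m1 m2 T j = 0}"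
  unfolding subspace_def
  using NP_psi_add[of l k m1 m2 0 0 j] by (simp add: NP_psi_add NP_psi_scaleR)

lemma eventually_at_left_0_iff:
  "eventually P (at_left (0::real)) \<longleftrightarrow> (\<exists>\<delta>>0. \<forall>t. -\<delta> < t \<and> t < 0 \<longrightarrow> P t)"
  by (subst eventually_at_left[of "-1"]) (auto, metis neg_less_0_iff_less minus_minus, force)

lemma vec_bound_of_component_bounds:
  fixes f :: "'b \<Rightarrow> real ^ 'n"
  assumes "\<And>i. \<exists>K. eventually (\<lambda>t. \<bar>f t $ i\<bar> \<le> K * h t) F"
  shows "\<exists>K. eventually (\<lambda>t. norm (f t) \<le> K * h t) F"
proof -
  obtain K where "\<And>i. eventually (\<lambda>t. \<bar>f t $ i\<bar> \<le> K i * h t) F"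
    using assms by metis
  then have "eventually (\<lambda>t. \<forall>i. \<bar>f t $ i\<bar> \<le> K i * h t) F"
    by (rule eventually_all_finite)
  then have "eventually (\<lambda>t. norm (f t) \<le> (\<Sum>i\<in>UNIV. K i) * h t) F"
  proof eventually_elim
    case (elim t)
    have "norm (f t) \<le> (\<Sum>i\<in>UNIV. \<bar>f t $ i\<bar>)"
      by (rule norm_le_l1_cart)
    also have "\<dots> \<le> (\<Sum>i\<in>UNIV. K i * h t)"
      using elim by (intro sum_mono) blast
    finally show ?case
      by (simp add: sum_distrib_right)
  qed
  then show ?thesis ..
qed

lemma fps_nth_weyl_expansion:
  fixes \<Omega> :: "real fps" and c :: "nat \<Rightarrow> nat \<Rightarrow> real" and W :: "nat \<Rightarrow> real"
  assumes \<Omega>0: "fps_nth \<Omega> 0 = 0" and \<Omega>1: "fps_nth \<Omega> 1 = -1"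
    and W: "\<And>i. W i = fact i * fps_nth \<Omega> i"
  defines "E \<equiv> (\<Sum>a\<le>4. \<Omega> ^ (5 - a) * Abs_fps (c a))"
  shows "fps_nth E 0 = 0"
    and "fps_nth E 1 = - c 4 0"
    and "fps_nth E 2 = c 3 0 + (W 2 / 2) * c 4 0 - c 4 1"
    and "fps_nth E 3 = - c 2 0 - W 2 * c 3 0 + (W 3 / 6) * c 4 0 + c 3 1 - c 4 2 + (W 2 / 2) * c 4 1"
    and "fps_nth E 4 = c 1 0 + (3 * W 2 / 2) * c 2 0 + ((W 2)\<^sup>2 / 4 - W 3 / 3) * c 3 0
            + (W 4 / fact 4) * c 4 0 - c 2 1 + c 3 2 - c 4 3 + (W 2 / 2) * c 4 2
            - W 2 * c 3 1 + (W 3 / 6) * c 4 1"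
    and "fps_nth E 5 = - c 0 0 - (2 * W 2) * c 1 0 + (W 3 / 2 - 3 / 4 * (W 2)\<^sup>2) * c 2 0
            + (1 / 6 * W 2 * W 3 - W 4 / 12) * c 3 0 + (W 5 / fact 5) * c 4 0
            + c 1 1 - c 2 2 + c 3 3 - c 4 4 + (3 / 2 * W 2) * c 2 1 - W 2 * c 3 2
            + (W 2 / 2) * c 4 3 + ((W 2)\<^sup>2 / 4) * c 3 1 - (W 3 / 3) * c 3 1
            + (W 3 / 6) * c 4 2 + (W 4 / fact 4) * c 4 1"
  unfolding E_def using \<Omega>0 \<Omega>1
  by (simp_all add: W fps_sum_nth fps_mult_nth eval_nat_numeral sum.atMost_Suc_shift
        sum.atLeast0_atMost_Suc atLeast0AtMost algebra_simps power2_eq_square)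

lemma weyl_expansion_terms_in_subspace:
  assumes S: "subspace S"
  shows "(\<And>i. C 4 i \<in> S) \<Longrightarrow> dN C \<in> S"
    and "(\<And>a i. 3 \<le> a \<Longrightarrow> a \<le> 4 \<Longrightarrow> C a i \<in> S) \<Longrightarrow> eIII C W \<in> S"
    and "(\<And>a i. 2 \<le> a \<Longrightarrow> a \<le> 4 \<Longrightarrow> C a i \<in> S) \<Longrightarrow> fIID C W \<in> S"
    and "(\<And>a i. 1 \<le> a \<Longrightarrow> a \<le> 4 \<Longrightarrow> C a i \<in> S) \<Longrightarrow> gI C W \<in> S"
    and "(\<And>a i. a \<le> 4 \<Longrightarrow> C a i \<in> S) \<Longrightarrow> hI C W \<in> S"
  unfolding dN_def eIII_def fIID_def gI_def hI_def
  by (intro subspace_add subspace_diff subspace_scale subspace_neg S; simp)+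

lemma weyl_expansion_remainder:
  fixes \<Omega> :: "real fps" and Cf :: "nat \<Rightarrow> real \<Rightarrow> tensor4" and C :: "nat \<Rightarrow> nat \<Rightarrow> tensor4"
  assumes Om: "Om has_fps_expansion \<Omega>"
    and \<Omega>0: "fps_nth \<Omega> 0 = 0" and \<Omega>1: "fps_nth \<Omega> 1 = -1"
    and W: "\<And>i. W i = fact i * fps_nth \<Omega> i"
    and C: "\<And>a idx. a \<le> 4 \<Longrightarrow> (\<lambda>t. Cf a t $ idx) has_fps_expansion Abs_fps (\<lambda>i. C a i $ idx)"
    and LC: "eventually (\<lambda>t. LC t = (\<Sum>a\<le>4. Om t ^ (5 - a) *\<^sub>R Cf a t)) (at_left 0)"
  shows "\<exists>K. eventually (\<lambda>t. norm (LC t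
            - (t *\<^sub>R dN C + t\<^sup>2 *\<^sub>R eIII C W + t ^ 3 *\<^sub>R fIID C W + t ^ 4 *\<^sub>R gI C W
               + t ^ 5 *\<^sub>R hI C W)) \<le> K * \<bar>t\<bar> ^ 6) (at_left 0)"
proof (rule vec_bound_of_component_bounds)
  fix idx
  define E where "E = (\<Sum>a\<le>4. \<Omega> ^ (5 - a) * Abs_fps (\<lambda>i. C a i $ idx))"
  have exp: "(\<lambda>t. \<Sum>a\<le>4. Om t ^ (5 - a) * Cf a t $ idx) has_fps_expansion E"
    unfolding E_def by (intro has_fps_expansion_sum has_fps_expansion_mult has_fps_expansion_power Om C) simp
  have coeff: "(\<Sum>n<6. fps_nth E n * t ^ n) =
      (t *\<^sub>R dN C + t\<^sup>2 *\<^sub>R eIII C W + t ^ 3 *\<^sub>R fIID C W + t ^ 4 *\<^sub>R gI C W + t ^ 5 *\<^sub>R hI C W) $ idx"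
    for t
    using fps_nth_weyl_expansion[OF \<Omega>0 \<Omega>1 W, of "\<lambda>a i. C a i $ idx"]
    by (simp add: E_def eval_nat_numeral dN_def eIII_def fIID_def gI_def hI_def)
  have "eventually (\<lambda>t. \<bar>(\<Sum>a\<le>4. Om t ^ (5 - a) * Cf a t $ idx) - (\<Sum>n<6. fps_nth E n * t ^ n)\<bar>
               \<le> (\<bar>fps_nth E 6\<bar> + 1) * \<bar>t\<bar> ^ 6) (at_left 0)"
    using has_fps_expansion_remainder_bound[OF exp, of 6] unfolding eventually_at_filter
    by (rule eventually_mono) simp
  then have "eventually (\<lambda>t. \<bar>(LC t
            - (t *\<^sub>R dN C + t\<^sup>2 *\<^sub>R eIII C W + t ^ 3 *\<^sub>R fIID C W + t ^ 4 *\<^sub>R gI C W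
               + t ^ 5 *\<^sub>R hI C W)) $ idx\<bar> \<le> (\<bar>fps_nth E 6\<bar> + 1) * \<bar>t\<bar> ^ 6) (at_left 0)"
    using LC by eventually_elim (simp add: coeff)
  then show "\<exists>K. eventually (\<lambda>t. \<bar>(LC t
            - (t *\<^sub>R dN C + t\<^sup>2 *\<^sub>R eIII C W + t ^ 3 *\<^sub>R fIID C W + t ^ 4 *\<^sub>R gI C W
               + t ^ 5 *\<^sub>R hI C W)) $ idx\<bar> \<le> K * \<bar>t\<bar> ^ 6) (at_left 0)" ..
qed

theorem mainTheorem3:
  fixes g :: metric4 and l k m1 m2 :: vec4
    and Om :: "real \<Rightarrow> real" and Omc :: "nat \<Rightarrow> real"
    and LC :: "real \<Rightarrow> tensor4"
    and Cf :: "nat \<Rightarrow> real \<Rightarrow> tensor4" and C :: "nat \<Rightarrow> nat \<Rightarrow> tensor4"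
    and r :: real
  assumes g_sym: "\<forall>a b. g $ a $ b = g $ b $ a"
    and g_inv: "invertible g"
    and tetrad: "null_tetrad g l k m1 m2"
    and r_pos: "r > 0"
    and Om_series: "\<forall>t. \<bar>t\<bar> < r \<longrightarrow> (\<lambda>i. Omc i * t ^ i) sums Om t"
    and Om0: "Om 0 = 0"
    and Om1: "Omd Om 1 = -1"
    and C_series: "\<forall>a\<le>4. \<forall>t. \<bar>t\<bar> < r \<longrightarrow> (\<lambda>i. t ^ i *\<^sub>R C a i) sums Cf a t"
    and decomp: "\<forall>t. -r < t \<and> t < 0 \<longrightarrow>
                   LC t = (\<Sum>a\<le>4. Om t ^ (5 - a) *\<^sub>R Cf a t)"
    and C_weyl: "\<forall>a\<le>4. \<forall>t. -r < t \<and> t < 0 \<longrightarrow> weyl_candidate g (Cf a t)"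
    and C_psi: "\<forall>a\<le>4. \<forall>t. -r < t \<and> t < 0 \<longrightarrow>
                  (\<forall>j\<le>4. j \<noteq> a \<longrightarrow> NP_psi l k m1 m2 (Cf a t) j = 0)"
  shows "(\<exists>K \<delta>. \<delta> > 0 \<and> (\<forall>t. -\<delta> < t \<and> t < 0 \<longrightarrow>
            norm (LC t - (t *\<^sub>R dN C + t\<^sup>2 *\<^sub>R eIII C (Omd Om)
                          + t ^ 3 *\<^sub>R fIID C (Omd Om) + t ^ 4 *\<^sub>R gI C (Omd Om)
                          + t ^ 5 *\<^sub>R hI C (Omd Om)))
              \<le> K * \<bar>t\<bar> ^ 6))
       \<and> weyl_candidate g (dN C) \<and> weyl_candidate g (eIII C (Omd Om))
       \<and> weyl_candidate g (fIID C (Omd Om)) \<and> weyl_candidate g (gI C (Omd Om))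
       \<and> weyl_candidate g (hI C (Omd Om))
       \<and> (\<forall>j<4. NP_psi l k m1 m2 (dN C) j = 0)
       \<and> (\<forall>j<3. NP_psi l k m1 m2 (eIII C (Omd Om)) j = 0)
       \<and> (\<forall>j<2. NP_psi l k m1 m2 (fIID C (Omd Om)) j = 0)
       \<and> NP_psi l k m1 m2 (gI C (Omd Om)) 0 = 0"
proof -
  define Weyl where "Weyl = {T. weyl_candidate g T}"
  define Psi where "Psi j = {T. NP_psi l k m1 m2 T j = 0}" for j
  have at_left: "eventually P (at_left 0)" if "\<forall>t. -r < t \<and> t < 0 \<longrightarrow> P t" for P
    using that r_pos by (auto simp: eventually_at_left_0_iff)
  have Om_exp: "Om has_fps_expansion Abs_fps Omc"
    using Om_series by (intro sums_imp_has_fps_expansion[OF r_pos]) auto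
  have W: "Omd Om i = fact i * fps_nth (Abs_fps Omc) i" for i
    unfolding Omd_def by (rule higher_deriv_0_has_fps_expansion[OF Om_exp])
  have Omc0: "fps_nth (Abs_fps Omc) 0 = 0" and Omc1: "fps_nth (Abs_fps Omc) 1 = -1"
    using W[of 0] W[of 1] Om0 Om1 by (simp_all add: Omd_def)
  have C_exp: "(\<lambda>t. Cf a t $ idx) has_fps_expansion Abs_fps (\<lambda>i. C a i $ idx)" if "a \<le> 4" for a idx
    using that C_series by (intro bounded_linear_powser_has_fps_expansion[OF bounded_linear_vec_nth r_pos]) auto
  have C_in: "C a i \<in> S" if "a \<le> 4" "subspace S" "\<forall>t. -r < t \<and> t < 0 \<longrightarrow> Cf a t \<in> S" for a i S
    using that C_series by (intro powser_coeffs_in_subspace[OF _ r_pos, where F = "Cf a"] at_left) auto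
  have Weyl: "subspace Weyl" and Psi: "subspace (Psi j)" for j
    unfolding Weyl_def Psi_def by (rule subspace_weyl_candidate subspace_NP_psi_eq_0)+
  have weyl: "C a i \<in> Weyl" if "a \<le> 4" for a i
    using that C_weyl by (intro C_in[OF that Weyl]) (simp add: Weyl_def)
  have psi: "C a i \<in> Psi j" if "a \<le> 4" "j \<le> 4" "j \<noteq> a" for a i j
    using that C_psi by (intro C_in[OF that(1) Psi]) (simp add: Psi_def)
  show ?thesis
    using weyl_expansion_remainder[OF Om_exp Omc0 Omc1 W C_exp at_left[OF decomp]]
      weyl_expansion_terms_in_subspace[OF Weyl, of C, OF weyl]
      weyl_expansion_terms_in_subspace[OF Psi, of C, OF psi]
    by (simp add: eventually_at_left_0_iff Weyl_def Psi_def)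
qed

end
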